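(* Let $\Sigma$ be a finite alphabet and let $t$ be an unranked ordered $\Sigma$-labeled tree. Then $\|\mathrm{dag}(t)\| \le \|\mathrm{bdag}(t)\|$.
   Context: An unranked tree over $\Sigma$ is a finite rooted tree whose nodes are labeled by symbols of $\Sigma$ and in which the children of every node are linearly ordered (any node may have any finite number of children). The minimal dag $\mathrm{dag}(t)$ of a tree $t$ is obtained by merging all nodes that root identical subtrees (equal as ordered labeled trees); its nodes are in bijection with the distinct subtrees of $t$, and the node of a subtree $f(s_1,\dots,s_k)$ has $k$ ordered outgoing edges to the nodes of $s_1,\dots,s_k$. $\|\mathrm{dag}(t)\|$ denotes its number of nodes, i.e. the number of distinct subtrees of $t$. The first-child/next-sibling encoding $\mathrm{fcns}(t)$ is the binary tree with the same nodes and labels as $t$ in which the left child of a node $u$ is the first child of $u$ in $t$ (if it exists) and the right child of $u$ is the next sibling of $u$ in $t$ (if it exists); binary trees here have, at every node, an optional left child and an optional right child, which are distinguished. $\mathrm{bdag}(t)$ is the minimal dag of $\mathrm{fcns}(t)$ (merging identical subtrees of $\mathrm{fcns}(t)$, absent children not represented), and $\|\mathrm{bdag}(t)\|$ is its number of nodes, i.e. the number of distinct subtrees of $\mathrm{fcns}(t)$. *)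

theory Defs
  imports Main
begin

datatype 'a utree = Node 'a "'a utree list"

datatype 'a btree = BNode 'a "'a btree option" "'a btree option"

fun labels :: "'a utree \<Rightarrow> 'a set" where
  "labels (Node a ts) = insert a (\<Union>t\<in>set ts. labels t)"

fun usubtrees :: "'a utree \<Rightarrow> 'a utree set" where
  "usubtrees (Node a ts) = insert (Node a ts) (\<Union>t\<in>set ts. usubtrees t)"

fun bsubtrees :: "'a btree \<Rightarrow> 'a btree set" where
  "bsubtrees (BNode a l r) = insert (BNode a l r)
     ((case l of None \<Rightarrow> {} | Some x \<Rightarrow> bsubtrees x) \<union>
      (case r of None \<Rightarrow> {} | Some y \<Rightarrow> bsubtrees y))"

text \<open>First-child/next-sibling encoding of a list of siblings: the first element
  becomes the root, its left child encodes its children, its right child encodes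
  its following siblings.\<close>
fun fcns_forest :: "'a utree list \<Rightarrow> 'a btree option" where
  "fcns_forest [] = None"
| "fcns_forest (Node a cs # ts) = Some (BNode a (fcns_forest cs) (fcns_forest ts))"

fun fcns :: "'a utree \<Rightarrow> 'a btree" where
  "fcns (Node a cs) = BNode a (fcns_forest cs) None"

text \<open>Sizes of the minimal dags = numbers of distinct subtrees.\<close>
definition dag_size :: "'a utree \<Rightarrow> nat" where
  "dag_size t = card (usubtrees t)"

definition bdag_size :: "'a utree \<Rightarrow> nat" where
  "bdag_size t = card (bsubtrees (fcns t))"

end

theory Submission
  imports Defs
begin

text \<open>The node of \<open>fcns t\<close> carrying a node \<open>u\<close> of \<open>t\<close> roots the encoding of \<open>u\<close>'s
  children as its left subtree, so reading off its label and decoding its left subtree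
  recovers the subtree of \<open>t\<close> at \<open>u\<close>. Hence the distinct subtrees of \<open>t\<close> are the image of
  the distinct subtrees of \<open>fcns t\<close> under a single map, and there cannot be more of them.\<close>

fun unfcns_forest :: "'a btree option \<Rightarrow> 'a utree list" where
  "unfcns_forest None = []"
| "unfcns_forest (Some (BNode a l r)) = Node a (unfcns_forest l) # unfcns_forest r"

fun utree_of_btree :: "'a btree \<Rightarrow> 'a utree" where
  "utree_of_btree (BNode a l r) = Node a (unfcns_forest l)"

fun bsubtrees_option :: "'a btree option \<Rightarrow> 'a btree set" where
  "bsubtrees_option None = {}"
| "bsubtrees_option (Some b) = bsubtrees b"

lemma unfcns_fcns_forest [simp]: "unfcns_forest (fcns_forest ts) = ts"
  by (induction ts rule: fcns_forest.induct) auto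

lemma finite_bsubtrees: "finite (bsubtrees b)"
  by (induction b rule: bsubtrees.induct) (auto split: option.splits)

lemma bsubtrees_fcns_forest_Cons:
  "bsubtrees_option (fcns_forest (Node a cs # ts)) =
     insert (BNode a (fcns_forest cs) (fcns_forest ts))
       (bsubtrees_option (fcns_forest cs) \<union> bsubtrees_option (fcns_forest ts))"
  by (cases "fcns_forest cs"; cases "fcns_forest ts") auto

lemma usubtrees_forest_subset_image_fcns_forest:
  "(\<Union>t\<in>set ts. usubtrees t) \<subseteq> utree_of_btree ` bsubtrees_option (fcns_forest ts)"
proof (induction ts rule: fcns_forest.induct)
  case 1
  then show ?case by simp
next
  case (2 a cs ts)
  have "Node a cs = utree_of_btree (BNode a (fcns_forest cs) (fcns_forest ts))"
    by simp
  with 2 show ?case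
    unfolding bsubtrees_fcns_forest_Cons by auto
qed

lemma usubtrees_subset_image_fcns:
  "usubtrees t \<subseteq> utree_of_btree ` bsubtrees (fcns t)"
proof (cases t)
  case (Node a cs)
  have "bsubtrees (fcns t) = insert (fcns t) (bsubtrees_option (fcns_forest cs))"
    using Node by (cases "fcns_forest cs") auto
  moreover have "utree_of_btree (fcns t) = t"
    using Node by simp
  ultimately show ?thesis
    using Node usubtrees_forest_subset_image_fcns_forest[of cs] by auto
qed

theorem lemma2:
  fixes \<Sigma> :: "'a set" and t :: "'a utree"
  assumes "finite \<Sigma>" and "labels t \<subseteq> \<Sigma>"
  shows "dag_size t \<le> bdag_size t"
proof -
  have "card (usubtrees t) \<le> card (utree_of_btree ` bsubtrees (fcns t))"
    by (intro card_mono finite_imageI finite_bsubtrees usubtrees_subset_image_fcns)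
  also have "\<dots> \<le> card (bsubtrees (fcns t))"
    by (intro card_image_le finite_bsubtrees)
  finally show ?thesis
    unfolding dag_size_def bdag_size_def .
qed

end
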